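(* Let $1\le k<n$. Every RYD in $\mathbb{Y}_{OG(k,2n+1)}$ is a $W^{OG(k,2n+1)}$-diagram, i.e. $\mathbb{Y}_{OG(k,2n+1)}\subseteq\Theta(k,2n+1)$.
   Context: Root system $B_n$: positive roots $e_a\pm e_b$ ($a<b$), $e_a$; simple roots $e_i-e_{i+1}$ ($i<n$), $e_n$; order $\alpha\le\beta$ iff $\beta-\alpha$ is a nonnegative integer combination of simple roots. $W^{OG(k,2n+1)}$ is the set of signed permutations $w=(y_1,\dots,y_{k-r},\overline{z_r},\dots,\overline{z_1},v_1,\dots,v_{n-k})$ of $1,\dots,n$ (bars = negative entries) with $0\le r\le k$, $y_1<\dots<y_{k-r}$, $z_r>\dots>z_1$, $v_1<\dots<v_{n-k}$, acting by $e_a\mapsto\pm e_{|w(a)|}$ (minus if barred); $\mathrm{Inv}(w)$ is the set of positive roots sent to negative roots, and $\mathbb{Y}_{OG(k,2n+1)}=\{\mathrm{Inv}(w)\}$. The base region is the set of roots $e_a\pm e_b$ ($a\le k<b$) and $e_a$ ($a\le k$); its $i$-th row ($1\le i\le k$) consists of $e_{k+1-i}\pm e_b$ ($b>k$) and $e_{k+1-i}$. The top region is the set of roots $e_a+e_b$ with $a<b\le k$. Both regions are subposets. A subset $S$ of the union of the two regions is a $W^{OG(k,2n+1)}$-diagram if $S$ meets each region in a lower order ideal of that region and satisfies the support condition: for each top-region root $e_a+e_b$ ($a<b\le k$), if $S$ contains more than $2n+1-2k$ roots of the base rows indexed by $a$ and $b$ (i.e. rows $k+1-a$ and $k+1-b$)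 combined, then $e_a+e_b\in S$, and if it contains fewer than $2n+1-2k$ such roots then $e_a+e_b\notin S$. $\Theta(k,2n+1)$ is the set of these diagrams. *)

theory Defs
  imports Main
begin

text \<open>Vectors in the span of e_1,...,e_n are represented as functions nat => int
  (coefficient of e_j at index j). Roots of B_n are such vectors.\<close>

type_synonym vec = "nat \<Rightarrow> int"

definition ev :: "nat \<Rightarrow> vec" where
  "ev a = (\<lambda>j. if j = a then 1 else 0)"

definition vadd :: "vec \<Rightarrow> vec \<Rightarrow> vec" where
  "vadd u v = (\<lambda>j. u j + v j)"

definition vsub :: "vec \<Rightarrow> vec \<Rightarrow> vec" where
  "vsub u v = (\<lambda>j. u j - v j)"

definition vneg :: "vec \<Rightarrow> vec" where
  "vneg v = (\<lambda>j. - v j)"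

definition pos_roots :: "nat \<Rightarrow> vec set" where
  "pos_roots n =
     {vsub (ev a) (ev b) | a b. 1 \<le> a \<and> a < b \<and> b \<le> n}
   \<union> {vadd (ev a) (ev b) | a b. 1 \<le> a \<and> a < b \<and> b \<le> n}
   \<union> {ev a | a. 1 \<le> a \<and> a \<le> n}"

definition neg_roots :: "nat \<Rightarrow> vec set" where
  "neg_roots n = vneg ` pos_roots n"

definition simple_root :: "nat \<Rightarrow> nat \<Rightarrow> vec" where
  "simple_root n i = (if i < n then vsub (ev i) (ev (i + 1)) else ev n)"

definition root_le :: "nat \<Rightarrow> vec \<Rightarrow> vec \<Rightarrow> bool" where
  "root_le n \<alpha> \<beta> \<longleftrightarrow>
     (\<exists>c :: nat \<Rightarrow> nat. \<forall>j. \<beta> j - \<alpha> j = (\<Sum>i\<in>{1..n}. int (c i) * simple_root n i j))"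

text \<open>Signed permutations of 1..n: w a is the (signed) image of a; a barred entry is negative.\<close>
definition signed_perm :: "nat \<Rightarrow> (nat \<Rightarrow> int) \<Rightarrow> bool" where
  "signed_perm n w \<longleftrightarrow>
     (\<forall>a\<in>{1..n}. w a \<noteq> 0) \<and> (\<forall>a. a \<notin> {1..n} \<longrightarrow> w a = 0) \<and>
     bij_betw (\<lambda>a. nat \<bar>w a\<bar>) {1..n} {1..n}"

text \<open>W^{OG(k,2n+1)}: w = (y_1..y_{k-r}, bar z_r .. bar z_1, v_1..v_{n-k}) with
  y increasing, z_r > ... > z_1, v increasing (all y, z, v positive).\<close>
definition W_OG :: "nat \<Rightarrow> nat \<Rightarrow> (nat \<Rightarrow> int) set" where
  "W_OG k n = {w. signed_perm n w \<and> (\<exists>r \<le> k.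
      (\<forall>a\<in>{1..k-r}. w a > 0) \<and>
      (\<forall>a\<in>{1..k-r}. \<forall>b\<in>{1..k-r}. a < b \<longrightarrow> w a < w b) \<and>
      (\<forall>a\<in>{k-r+1..k}. w a < 0) \<and>
      (\<forall>a\<in>{k-r+1..k}. \<forall>b\<in>{k-r+1..k}. a < b \<longrightarrow> \<bar>w a\<bar> > \<bar>w b\<bar>) \<and>
      (\<forall>a\<in>{k+1..n}. w a > 0) \<and>
      (\<forall>a\<in>{k+1..n}. \<forall>b\<in>{k+1..n}. a < b \<longrightarrow> w a < w b))}"

definition act :: "nat \<Rightarrow> (nat \<Rightarrow> int) \<Rightarrow> vec \<Rightarrow> vec" where
  "act n w v = (\<lambda>j. \<Sum>a\<in>{1..n}. if nat \<bar>w a\<bar> = j then sgn (w a) * v a else 0)"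

definition Inv :: "nat \<Rightarrow> (nat \<Rightarrow> int) \<Rightarrow> vec set" where
  "Inv n w = {\<alpha> \<in> pos_roots n. act n w \<alpha> \<in> neg_roots n}"

definition Y_OG :: "nat \<Rightarrow> nat \<Rightarrow> vec set set" where
  "Y_OG k n = Inv n ` W_OG k n"

definition base_row_idx :: "nat \<Rightarrow> nat \<Rightarrow> nat \<Rightarrow> vec set" where
  \<comment> \<open>roots of the base region with first index a, i.e. row k+1-a\<close>
  "base_row_idx k n a =
     {vsub (ev a) (ev b) | b. k < b \<and> b \<le> n}
   \<union> {vadd (ev a) (ev b) | b. k < b \<and> b \<le> n} \<union> {ev a}"

definition base_region :: "nat \<Rightarrow> nat \<Rightarrow> vec set" where
  "base_region k n = (\<Union>a\<in>{1..k}. base_row_idx k n a)"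

definition base_row :: "nat \<Rightarrow> nat \<Rightarrow> nat \<Rightarrow> vec set" where
  "base_row k n i = base_row_idx k n (k + 1 - i)"

definition top_region :: "nat \<Rightarrow> vec set" where
  "top_region k = {vadd (ev a) (ev b) | a b. 1 \<le> a \<and> a < b \<and> b \<le> k}"

definition lower_ideal :: "nat \<Rightarrow> vec set \<Rightarrow> vec set \<Rightarrow> bool" where
  "lower_ideal n R S \<longleftrightarrow> S \<subseteq> R \<and> (\<forall>\<beta>\<in>S. \<forall>\<alpha>\<in>R. root_le n \<alpha> \<beta> \<longrightarrow> \<alpha> \<in> S)"

definition is_W_OG_diagram :: "nat \<Rightarrow> nat \<Rightarrow> vec set \<Rightarrow> bool" where
  "is_W_OG_diagram k n S \<longleftrightarrow>
     S \<subseteq> base_region k n \<union> top_region k \<and>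
     lower_ideal n (base_region k n) (S \<inter> base_region k n) \<and>
     lower_ideal n (top_region k) (S \<inter> top_region k) \<and>
     (\<forall>a b. 1 \<le> a \<and> a < b \<and> b \<le> k \<longrightarrow>
        (let c = card (S \<inter> (base_row k n (k + 1 - a) \<union> base_row k n (k + 1 - b))) in
          (c > 2 * n + 1 - 2 * k \<longrightarrow> vadd (ev a) (ev b) \<in> S) \<and>
          (c < 2 * n + 1 - 2 * k \<longrightarrow> vadd (ev a) (ev b) \<notin> S)))"

definition Theta :: "nat \<Rightarrow> nat \<Rightarrow> vec set set" where
  "Theta k n = {S. is_W_OG_diagram k n S}"

end

theory Submission
  imports Defs
begin

text \<open>Order the signed unit vectors as \<open>e\<^sub>1 > \<dots> > e\<^sub>n > -e\<^sub>n > \<dots> > -e\<^sub>1\<close> and let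
  \<open>\<kappa> a\<close> be the position of \<open>w(e\<^sub>a)\<close> in this order, numbered \<open>n, \<dots>, 1, -1, \<dots>, -n\<close>.
  Then \<open>e\<^sub>a - e\<^sub>b\<close> (\<open>a < b\<close>) is an inversion iff \<open>\<kappa> a < \<kappa> b\<close>, \<open>e\<^sub>a + e\<^sub>b\<close> iff
  \<open>\<kappa> a + \<kappa> b < 0\<close>, and \<open>e\<^sub>a\<close> iff \<open>\<kappa> a < 0\<close>; for \<open>w \<in> W\<^sup>O\<^sup>G\<close> the function \<open>\<kappa>\<close> is
  decreasing on \<open>1..k\<close> and on \<open>k+1..n\<close> and positive on \<open>k+1..n\<close>. This confines the
  inversions to the two regions, and comparing prefix sums (which are monotone for the root
  order) shows that they form a lower ideal in each region. Row \<open>a\<close> of the base region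
  contains \<open>#{x > k. \<kappa> a < \<kappa> x} + #{x > k. \<kappa> a + \<kappa> x < 0} + [\<kappa> a < 0]\<close> inversions;
  adding rows \<open>a < b\<close> and splitting on the signs of \<open>\<kappa> a > \<kappa> b\<close> gives at least
  \<open>2(n - k) + 1\<close> inversions when \<open>\<kappa> a + \<kappa> b < 0\<close> and at most that many otherwise,
  which is the support condition.\<close>

lemma act_ev:
  assumes "a \<in> {1..n}"
  shows "act n w (ev a) = (\<lambda>j. sgn (w a) * ev (nat \<bar>w a\<bar>) j)"
proof
  fix j
  have "act n w (ev a) j = (\<Sum>x\<in>{1..n}. if x = a then (if nat \<bar>w a\<bar> = j then sgn (w a) else 0) else 0)"
    unfolding act_def by (rule sum.cong) (auto simp: ev_def)
  also have "\<dots> = sgn (w a) * ev (nat \<bar>w a\<bar>) j"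
    using assms by (simp add: sum.delta ev_def)
  finally show "act n w (ev a) j = sgn (w a) * ev (nat \<bar>w a\<bar>) j" .
qed

lemma act_vadd: "act n w (vadd u v) = vadd (act n w u) (act n w v)"
  unfolding act_def vadd_def by (auto simp: fun_eq_iff sum.distrib[symmetric] algebra_simps intro!: sum.cong)

lemma act_vsub: "act n w (vsub u v) = vsub (act n w u) (act n w v)"
  unfolding act_def vsub_def by (auto simp: fun_eq_iff sum_subtractf[symmetric] algebra_simps intro!: sum.cong)

lemma sum_ev: "finite A \<Longrightarrow> sum (ev a) A = of_bool (a \<in> A)"
  by (simp add: ev_def sum.delta')

lemma sum_vsub: "sum (vsub u v) A = sum u A - sum v A"
  by (simp add: vsub_def sum_subtractf)

lemma sum_vadd: "sum (vadd u v) A = sum u A + sum v A"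
  by (simp add: vadd_def sum.distrib)

lemma vsub_ev_inject: "a \<noteq> x \<Longrightarrow> a \<noteq> y \<Longrightarrow> vsub (ev a) (ev x) = vsub (ev a) (ev y) \<longleftrightarrow> x = y"
  by (auto simp: fun_eq_iff vsub_def ev_def dest!: spec[of _ x])

lemma vadd_ev_inject: "a \<noteq> x \<Longrightarrow> a \<noteq> y \<Longrightarrow> vadd (ev a) (ev x) = vadd (ev a) (ev y) \<longleftrightarrow> x = y"
  by (auto simp: fun_eq_iff vadd_def ev_def dest!: spec[of _ x])

lemma vsub_ev_neq_vadd_ev: "a \<noteq> x \<Longrightarrow> vsub (ev a) (ev x) \<noteq> vadd (ev a) (ev y)"
  by (auto simp: fun_eq_iff vsub_def vadd_def ev_def dest!: spec[of _ x])

lemma vsub_ev_neq_ev: "a \<noteq> x \<Longrightarrow> vsub (ev a) (ev x) \<noteq> ev a"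
  by (auto simp: fun_eq_iff vsub_def ev_def dest!: spec[of _ x])

lemma vadd_ev_neq_ev: "a \<noteq> x \<Longrightarrow> vadd (ev a) (ev x) \<noteq> ev a"
  by (auto simp: fun_eq_iff vadd_def ev_def dest!: spec[of _ x])

lemma neg_root_leading_coeff_nonpos:
  assumes "v \<in> neg_roots n" "\<And>i. i < m \<Longrightarrow> v i = 0"
  shows "v m \<le> 0"
proof -
  obtain \<rho> where "\<rho> \<in> pos_roots n" "v = vneg \<rho>" using assms(1) unfolding neg_roots_def by blast
  from \<open>\<rho> \<in> pos_roots n\<close> show ?thesis
    unfolding pos_roots_def
  proof (elim UnE CollectE exE conjE)
    fix a b assume "\<rho> = vsub (ev a) (ev b)" "a < b"
    with \<open>v = vneg \<rho>\<close> assms(2)[of a] show ?thesis by (auto simp: vneg_def vsub_def ev_def)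
  next
    fix a b assume "\<rho> = vadd (ev a) (ev b)" "a < b"
    with \<open>v = vneg \<rho>\<close> assms(2)[of a] show ?thesis by (auto simp: vneg_def vadd_def ev_def)
  next
    fix a assume "\<rho> = ev a"
    with \<open>v = vneg \<rho>\<close> assms(2)[of a] show ?thesis by (auto simp: vneg_def ev_def)
  qed
qed

lemma signed_unit_in_neg_roots_iff:
  assumes "p \<in> {1..n}" "s \<in> {1, -1}"
  shows "(\<lambda>j. s * ev p j) \<in> neg_roots n \<longleftrightarrow> s = -1"
proof
  assume "(\<lambda>j. s * ev p j) \<in> neg_roots n"
  from neg_root_leading_coeff_nonpos[OF this, of p] assms(2) show "s = -1"
    by (auto simp: ev_def)
next
  assume "s = -1"
  then have "(\<lambda>j. s * ev p j) = vneg (ev p)" by (auto simp: fun_eq_iff vneg_def)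
  moreover have "ev p \<in> pos_roots n" using assms unfolding pos_roots_def by auto
  ultimately show "(\<lambda>j. s * ev p j) \<in> neg_roots n" unfolding neg_roots_def by auto
qed

lemma signed_pair_in_neg_roots_iff_less:
  assumes "p < q" "p \<in> {1..n}" "q \<in> {1..n}" "s \<in> {1, -1}" "t \<in> {1, -1}"
  shows "(\<lambda>j. s * ev p j + t * ev q j) \<in> neg_roots n \<longleftrightarrow> s = -1"
proof
  assume "(\<lambda>j. s * ev p j + t * ev q j) \<in> neg_roots n"
  from neg_root_leading_coeff_nonpos[OF this, of p] assms(1,4) show "s = -1"
    by (auto simp: ev_def)
next
  assume "s = -1"
  then have "(\<lambda>j. s * ev p j + t * ev q j) = vneg (if t = -1 then vadd (ev p) (ev q) else vsub (ev p) (ev q))"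
    using assms by (auto simp: fun_eq_iff vneg_def vadd_def vsub_def)
  moreover have "(if t = -1 then vadd (ev p) (ev q) else vsub (ev p) (ev q)) \<in> pos_roots n"
    using assms unfolding pos_roots_def by auto
  ultimately show "(\<lambda>j. s * ev p j + t * ev q j) \<in> neg_roots n"
    unfolding neg_roots_def by auto
qed

lemma signed_pair_in_neg_roots_iff:
  assumes "p \<noteq> q" "p \<in> {1..n}" "q \<in> {1..n}" "s \<in> {1, -1}" "t \<in> {1, -1}"
  shows "(\<lambda>j. s * ev p j + t * ev q j) \<in> neg_roots n \<longleftrightarrow> (if p < q then s = -1 else t = -1)"
proof (cases "p < q")
  case False
  then have "q < p" using assms(1) by simp
  from signed_pair_in_neg_roots_iff_less[OF this assms(3,2,5,4)] False show ?thesis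
    by (simp add: add.commute)
qed (use signed_pair_in_neg_roots_iff_less assms in simp)

lemma simple_root_prefix_sum:
  assumes "i \<in> {1..n}" "1 \<le> j" "j \<le> n"
  shows "sum (simple_root n i) {1..j} = of_bool (i = j)"
  using assms by (simp add: simple_root_def sum_vsub sum_ev)

lemma root_le_prefix_sum_le:
  assumes "root_le n \<alpha> \<beta>" "1 \<le> j" "j \<le> n"
  shows "sum \<alpha> {1..j} \<le> sum \<beta> {1..j}"
proof -
  obtain c :: "nat \<Rightarrow> nat" where c: "\<And>x. \<beta> x - \<alpha> x = (\<Sum>i\<in>{1..n}. int (c i) * simple_root n i x)"
    using assms(1) unfolding root_le_def by blast
  have "sum \<beta> {1..j} - sum \<alpha> {1..j} = (\<Sum>x\<in>{1..j}. \<Sum>i\<in>{1..n}. int (c i) * simple_root n i x)"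
    by (simp add: c flip: sum_subtractf)
  also have "\<dots> = (\<Sum>i\<in>{1..n}. int (c i) * sum (simple_root n i) {1..j})"
    by (subst sum.swap) (simp add: sum_distrib_left)
  also have "\<dots> = (\<Sum>i\<in>{1..n}. if i = j then int (c i) else 0)"
    using assms(2,3) simple_root_prefix_sum[of _ n j] by (intro sum.cong) auto
  also have "\<dots> = int (c j)"
    using assms(2,3) by (simp add: sum.delta')
  finally show ?thesis by simp
qed

lemma base_row_idx_cases:
  assumes "\<alpha> \<in> base_row_idx k n a"
  obtains (unit) "\<alpha> = ev a"
    | (minus) b where "\<alpha> = vsub (ev a) (ev b)" "k < b" "b \<le> n"
    | (plus) b where "\<alpha> = vadd (ev a) (ev b)" "k < b" "b \<le> n"
  using assms unfolding base_row_idx_def by blast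

lemma prefix_sum_base_row:
  assumes "\<alpha> \<in> base_row_idx k n a" "a \<le> k" "j \<le> k"
  shows "sum \<alpha> {1..j} = of_bool (a \<in> {1..j})"
  using assms(1) by (cases rule: base_row_idx_cases) (use assms(2,3) in \<open>auto simp: sum_vsub sum_vadd sum_ev\<close>)

lemma base_rows_disjoint:
  assumes "a \<le> k" "b \<le> k" "a \<noteq> b"
  shows "base_row_idx k n a \<inter> base_row_idx k n b = {}"
proof -
  have "\<alpha> a = 1" if "\<alpha> \<in> base_row_idx k n a" for \<alpha>
    using that by (cases rule: base_row_idx_cases) (use assms in \<open>auto simp: vsub_def vadd_def ev_def\<close>)
  moreover have "\<alpha> a = 0" if "\<alpha> \<in> base_row_idx k n b" for \<alpha>
    using that by (cases rule: base_row_idx_cases) (use assms in \<open>auto simp: vsub_def vadd_def ev_def\<close>)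
  ultimately show ?thesis by fastforce
qed

lemma finite_base_row_idx: "finite (base_row_idx k n a)"
  unfolding base_row_idx_def by simp

lemma root_le_base_row_index_le:
  assumes "root_le n \<alpha> \<beta>" "\<alpha> \<in> base_row_idx k n a" "\<beta> \<in> base_row_idx k n c"
    and "1 \<le> a" "a \<le> k" "c \<le> k" "k \<le> n"
  shows "c \<le> a"
proof -
  have "sum \<alpha> {1..a} \<le> sum \<beta> {1..a}"
    using root_le_prefix_sum_le[OF assms(1), of a] assms(4,5,7) by simp
  then show ?thesis
    using prefix_sum_base_row[OF assms(2,5,5)] prefix_sum_base_row[OF assms(3,6,5)] assms(4)
    by (cases "c \<le> a") auto
qed

lemma root_le_vsub_ev_index_le:
  assumes "root_le n (vsub (ev a) (ev b)) (vsub (ev c) (ev d))"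
    and "1 \<le> a" "a < b" "b \<le> n" "1 \<le> c" "c < d" "d \<le> n"
  shows "b \<le> d"
proof -
  have "a < d"
    using root_le_prefix_sum_le[OF assms(1), of a] assms(2-6)
    by (cases "c \<le> a"; cases "d \<le> a") (simp_all add: sum_vsub sum_ev)
  then show ?thesis
    using root_le_prefix_sum_le[OF assms(1), of d] assms(2-7)
    by (cases "b \<le> d"; cases "c \<le> d") (simp_all add: sum_vsub sum_ev)
qed

lemma root_le_vadd_ev_index_le:
  assumes "root_le n (vadd (ev a) (ev b)) (vadd (ev c) (ev d))"
    and "1 \<le> a" "a < b" "b \<le> n" "1 \<le> c" "c < d"
  shows "c \<le> a" "d \<le> b"
proof -
  show "c \<le> a"
    using root_le_prefix_sum_le[OF assms(1), of a] assms(2-6)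
    by (cases "c \<le> a"; cases "d \<le> a") (simp_all add: sum_vadd sum_ev)
  then show "d \<le> b"
    using root_le_prefix_sum_le[OF assms(1), of b] assms(2-6)
    by (cases "d \<le> b") (simp_all add: sum_vadd sum_ev)
qed

lemma ev_mem_base_region: "1 \<le> a \<Longrightarrow> a \<le> k \<Longrightarrow> ev a \<in> base_region k n"
  unfolding base_region_def base_row_idx_def by (rule UN_I[of a]) auto

lemma vsub_ev_mem_base_region:
  "1 \<le> a \<Longrightarrow> a \<le> k \<Longrightarrow> k < b \<Longrightarrow> b \<le> n \<Longrightarrow> vsub (ev a) (ev b) \<in> base_region k n"
  unfolding base_region_def base_row_idx_def by (rule UN_I[of a]) auto

lemma vadd_ev_mem_base_region:
  "1 \<le> a \<Longrightarrow> a \<le> k \<Longrightarrow> k < b \<Longrightarrow> b \<le> n \<Longrightarrow> vadd (ev a) (ev b) \<in> base_region k n"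
  unfolding base_region_def base_row_idx_def by (rule UN_I[of a]) auto

lemma vadd_ev_mem_top_region: "1 \<le> a \<Longrightarrow> a < b \<Longrightarrow> b \<le> k \<Longrightarrow> vadd (ev a) (ev b) \<in> top_region k"
  unfolding top_region_def by blast

lemma card_above_add_card_below:
  fixes f :: "'a \<Rightarrow> int"
  assumes "finite V"
  shows "p + q < 0 \<Longrightarrow> card V \<le> card {x \<in> V. p < f x} + card {x \<in> V. q + f x < 0}"
    and "0 < p + q \<Longrightarrow> card {x \<in> V. p < f x} + card {x \<in> V. q + f x < 0} \<le> card V"
proof -
  let ?A = "{x \<in> V. p < f x}" and ?B = "{x \<in> V. q + f x < 0}"
  have fin: "finite ?A" "finite ?B" using assms by simp_all
  show "card V \<le> card ?A + card ?B" if "p + q < 0"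
  proof -
    have "x \<in> ?A \<union> ?B" if "x \<in> V" for x
      using \<open>p + q < 0\<close> that by (cases "p < f x") simp_all
    then have "card V \<le> card (?A \<union> ?B)"
      by (intro card_mono finite_UnI fin) blast
    also have "\<dots> \<le> card ?A + card ?B" by (rule card_Un_le)
    finally show ?thesis .
  qed
  show "card ?A + card ?B \<le> card V" if "0 < p + q"
  proof -
    have "?A \<inter> ?B = {}" using that by auto
    then have "card ?A + card ?B = card (?A \<union> ?B)" by (simp add: card_Un_disjoint fin)
    also have "\<dots> \<le> card V" by (intro card_mono assms) blast
    finally show ?thesis .
  qed
qed

definition signed_rank :: "nat \<Rightarrow> int \<Rightarrow> int" where
  "signed_rank n v = sgn v * (int n + 1 - \<bar>v\<bar>)"

lemma signed_rank_neg_iff: "\<bar>u\<bar> \<le> int n \<Longrightarrow> signed_rank n u < 0 \<longleftrightarrow> u < 0"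
  by (auto simp: signed_rank_def sgn_if mult_less_0_iff)

lemma signed_rank_pos_iff: "\<bar>u\<bar> \<le> int n \<Longrightarrow> 0 < signed_rank n u \<longleftrightarrow> 0 < u"
  by (auto simp: signed_rank_def sgn_if zero_less_mult_iff)

lemma signed_rank_less_if:
  assumes "\<bar>u\<bar> \<le> int n" "\<bar>v\<bar> \<le> int n"
    and "0 < u \<and> u < v \<or> v < 0 \<and> 0 < u \<or> v < 0 \<and> u < 0 \<and> \<bar>v\<bar> < \<bar>u\<bar>"
  shows "signed_rank n v < signed_rank n u"
  using assms by (auto simp: signed_rank_def sgn_if)

lemma signed_rank_less_iff:
  assumes "u \<noteq> 0" "v \<noteq> 0" "\<bar>u\<bar> \<le> int n" "\<bar>v\<bar> \<le> int n" "\<bar>u\<bar> \<noteq> \<bar>v\<bar>"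
  shows "signed_rank n u < signed_rank n v \<longleftrightarrow> (if \<bar>u\<bar> < \<bar>v\<bar> then u < 0 else 0 < v)"
  using assms by (auto simp: signed_rank_def sgn_if abs_if)

lemma signed_rank_add_neg_iff:
  assumes "u \<noteq> 0" "v \<noteq> 0" "\<bar>u\<bar> \<le> int n" "\<bar>v\<bar> \<le> int n" "\<bar>u\<bar> \<noteq> \<bar>v\<bar>"
  shows "signed_rank n u + signed_rank n v < 0 \<longleftrightarrow> (if \<bar>u\<bar> < \<bar>v\<bar> then u < 0 else v < 0)"
  using assms by (auto simp: signed_rank_def sgn_if abs_if)

lemma abs_signed_rank_eq_iff:
  assumes "u \<noteq> 0" "v \<noteq> 0" "\<bar>u\<bar> \<le> int n" "\<bar>v\<bar> \<le> int n"
  shows "\<bar>signed_rank n u\<bar> = \<bar>signed_rank n v\<bar> \<longleftrightarrow> \<bar>u\<bar> = \<bar>v\<bar>"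
  using assms by (auto simp: signed_rank_def sgn_if abs_if)

locale signed_permutation =
  fixes n :: nat and w :: "nat \<Rightarrow> int"
  assumes signed_perm: "signed_perm n w"
begin

definition \<kappa> :: "nat \<Rightarrow> int" where
  "\<kappa> a = signed_rank n (w a)"

lemma w_nonzero: "a \<in> {1..n} \<Longrightarrow> w a \<noteq> 0"
  using signed_perm unfolding signed_perm_def by blast

lemma abs_w_mem: "a \<in> {1..n} \<Longrightarrow> nat \<bar>w a\<bar> \<in> {1..n}"
  using signed_perm unfolding signed_perm_def bij_betw_def by blast

lemma abs_w_le: "a \<in> {1..n} \<Longrightarrow> \<bar>w a\<bar> \<le> int n"
  using abs_w_mem by fastforce

lemma abs_w_inj: "a \<in> {1..n} \<Longrightarrow> b \<in> {1..n} \<Longrightarrow> nat \<bar>w a\<bar> = nat \<bar>w b\<bar> \<Longrightarrow> a = b"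
  using signed_perm unfolding signed_perm_def bij_betw_def inj_on_def by blast

lemma sgn_w_mem: "a \<in> {1..n} \<Longrightarrow> sgn (w a) \<in> {1, -1}"
  using w_nonzero by (auto simp: sgn_if)

lemma \<kappa>_nonzero:
  assumes "a \<in> {1..n}"
  shows "\<kappa> a \<noteq> 0"
  using w_nonzero[OF assms] abs_w_le[OF assms] by (simp add: \<kappa>_def signed_rank_def sgn_0_0)

lemma abs_\<kappa>_inj: "a \<in> {1..n} \<Longrightarrow> b \<in> {1..n} \<Longrightarrow> \<bar>\<kappa> a\<bar> = \<bar>\<kappa> b\<bar> \<Longrightarrow> a = b"
  unfolding \<kappa>_def using abs_signed_rank_eq_iff w_nonzero abs_w_le abs_w_inj by (metis nat_int)

lemma ev_in_Inv_iff:
  assumes "a \<in> {1..n}"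
  shows "ev a \<in> Inv n w \<longleftrightarrow> \<kappa> a < 0"
proof -
  have "ev a \<in> pos_roots n" using assms unfolding pos_roots_def by auto
  moreover have "act n w (ev a) \<in> neg_roots n \<longleftrightarrow> w a < 0"
    using signed_unit_in_neg_roots_iff[OF abs_w_mem sgn_w_mem] assms by (simp add: act_ev sgn_if)
  ultimately show ?thesis
    using assms by (simp add: Inv_def \<kappa>_def signed_rank_neg_iff abs_w_le)
qed

lemma vsub_ev_in_Inv_iff:
  assumes "1 \<le> a" "a < b" "b \<le> n"
  shows "vsub (ev a) (ev b) \<in> Inv n w \<longleftrightarrow> \<kappa> a < \<kappa> b"
proof -
  have ab: "a \<in> {1..n}" "b \<in> {1..n}" using assms by auto
  then have ne: "nat \<bar>w a\<bar> \<noteq> nat \<bar>w b\<bar>" using abs_w_inj assms(2) by blast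
  have "- sgn (w b) \<in> {1, -1}" using sgn_w_mem[OF ab(2)] by auto
  have "act n w (vsub (ev a) (ev b)) = (\<lambda>j. sgn (w a) * ev (nat \<bar>w a\<bar>) j + - sgn (w b) * ev (nat \<bar>w b\<bar>) j)"
    unfolding act_vsub act_ev[OF ab(1)] act_ev[OF ab(2)] by (simp add: vsub_def)
  with signed_pair_in_neg_roots_iff[OF ne abs_w_mem[OF ab(1)] abs_w_mem[OF ab(2)] sgn_w_mem[OF ab(1)] \<open>- sgn (w b) \<in> {1, -1}\<close>]
  have "act n w (vsub (ev a) (ev b)) \<in> neg_roots n \<longleftrightarrow> (if \<bar>w a\<bar> < \<bar>w b\<bar> then w a < 0 else 0 < w b)"
    by (simp add: nat_less_eq_zless sgn_1_neg sgn_1_pos)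
  moreover have "vsub (ev a) (ev b) \<in> pos_roots n" using assms unfolding pos_roots_def by blast
  ultimately show ?thesis
    using ab ne by (simp add: Inv_def \<kappa>_def signed_rank_less_iff w_nonzero abs_w_le)
qed

lemma vadd_ev_in_Inv_iff:
  assumes "1 \<le> a" "a < b" "b \<le> n"
  shows "vadd (ev a) (ev b) \<in> Inv n w \<longleftrightarrow> \<kappa> a + \<kappa> b < 0"
proof -
  have ab: "a \<in> {1..n}" "b \<in> {1..n}" using assms by auto
  then have ne: "nat \<bar>w a\<bar> \<noteq> nat \<bar>w b\<bar>" using abs_w_inj assms(2) by blast
  have "act n w (vadd (ev a) (ev b)) = (\<lambda>j. sgn (w a) * ev (nat \<bar>w a\<bar>) j + sgn (w b) * ev (nat \<bar>w b\<bar>) j)"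
    unfolding act_vadd act_ev[OF ab(1)] act_ev[OF ab(2)] by (simp add: vadd_def)
  with signed_pair_in_neg_roots_iff[OF ne abs_w_mem[OF ab(1)] abs_w_mem[OF ab(2)] sgn_w_mem[OF ab(1)] sgn_w_mem[OF ab(2)]]
  have "act n w (vadd (ev a) (ev b)) \<in> neg_roots n \<longleftrightarrow> (if \<bar>w a\<bar> < \<bar>w b\<bar> then w a < 0 else w b < 0)"
    by (simp add: nat_less_eq_zless sgn_1_neg)
  moreover have "vadd (ev a) (ev b) \<in> pos_roots n" using assms unfolding pos_roots_def by blast
  ultimately show ?thesis
    using ab ne by (simp add: Inv_def \<kappa>_def signed_rank_add_neg_iff w_nonzero abs_w_le)
qed

lemma card_Inv_base_row:
  assumes "1 \<le> a" "a \<le> k" "k \<le> n"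
  shows "card (Inv n w \<inter> base_row_idx k n a) =
    card {x \<in> {k<..n}. \<kappa> a < \<kappa> x} + card {x \<in> {k<..n}. \<kappa> a + \<kappa> x < 0} + of_bool (\<kappa> a < 0)"
proof -
  let ?M = "(\<lambda>x. vsub (ev a) (ev x)) ` {x \<in> {k<..n}. \<kappa> a < \<kappa> x}"
  let ?P = "(\<lambda>x. vadd (ev a) (ev x)) ` {x \<in> {k<..n}. \<kappa> a + \<kappa> x < 0}"
  let ?E = "if \<kappa> a < 0 then {ev a} else {}"
  have "Inv n w \<inter> base_row_idx k n a = ?M \<union> ?P \<union> ?E"
    using assms by (auto simp: base_row_idx_def vsub_ev_in_Inv_iff vadd_ev_in_Inv_iff ev_in_Inv_iff)
  moreover have "?M \<inter> ?P = {}" "(?M \<union> ?P) \<inter> ?E = {}"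
    using assms by (auto simp: vsub_ev_neq_vadd_ev vsub_ev_neq_ev vadd_ev_neq_ev dest: sym)
  moreover have "card ?M = card {x \<in> {k<..n}. \<kappa> a < \<kappa> x}"
    using assms by (intro card_image inj_onI) (auto simp: vsub_ev_inject)
  moreover have "card ?P = card {x \<in> {k<..n}. \<kappa> a + \<kappa> x < 0}"
    using assms by (intro card_image inj_onI) (auto simp: vadd_ev_inject)
  ultimately show ?thesis by (simp add: card_Un_disjoint)
qed

end

locale grassmannian_signed_perm = signed_permutation +
  fixes k :: nat
  assumes k_le_n: "k \<le> n"
    and \<kappa>_decreasing_low: "1 \<le> a \<Longrightarrow> a < b \<Longrightarrow> b \<le> k \<Longrightarrow> \<kappa> b < \<kappa> a"
    and \<kappa>_decreasing_high: "k < a \<Longrightarrow> a < b \<Longrightarrow> b \<le> n \<Longrightarrow> \<kappa> b < \<kappa> a"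
    and \<kappa>_pos_high: "k < a \<Longrightarrow> a \<le> n \<Longrightarrow> 0 < \<kappa> a"

lemma grassmannian_signed_perm_if_W_OG:
  assumes "w \<in> W_OG k n" "k \<le> n"
  shows "grassmannian_signed_perm n w k"
proof -
  from assms(1) obtain r where sp: "signed_perm n w"
    and Y: "\<forall>a\<in>{1..k-r}. w a > 0" "\<forall>a\<in>{1..k-r}. \<forall>b\<in>{1..k-r}. a < b \<longrightarrow> w a < w b"
    and Z: "\<forall>a\<in>{k-r+1..k}. w a < 0" "\<forall>a\<in>{k-r+1..k}. \<forall>b\<in>{k-r+1..k}. a < b \<longrightarrow> \<bar>w a\<bar> > \<bar>w b\<bar>"
    and V: "\<forall>a\<in>{k+1..n}. w a > 0" "\<forall>a\<in>{k+1..n}. \<forall>b\<in>{k+1..n}. a < b \<longrightarrow> w a < w b"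
    unfolding W_OG_def by blast
  interpret signed_permutation n w by (rule signed_permutation.intro) (fact sp)
  show ?thesis
  proof unfold_locales
    fix a b assume ab: "1 \<le> a" "a < b" "b \<le> k"
    have "0 < w a \<and> w a < w b \<or> w b < 0 \<and> 0 < w a \<or> w b < 0 \<and> w a < 0 \<and> \<bar>w b\<bar> < \<bar>w a\<bar>"
      using Y Z ab by (cases "b \<le> k - r"; cases "a \<le> k - r") auto
    then show "\<kappa> b < \<kappa> a"
      unfolding \<kappa>_def using ab assms(2) by (intro signed_rank_less_if abs_w_le) auto
  next
    fix a b assume "k < a" "a < b" "b \<le> n"
    then show "\<kappa> b < \<kappa> a"
      unfolding \<kappa>_def using V by (intro signed_rank_less_if abs_w_le) auto
  next
    fix a assume "k < a" "a \<le> n"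
    then show "0 < \<kappa> a"
      unfolding \<kappa>_def using V by (simp add: signed_rank_pos_iff abs_w_le)
  qed (fact assms(2))
qed

context grassmannian_signed_perm
begin

lemma \<kappa>_antimono_low: "1 \<le> a \<Longrightarrow> a \<le> b \<Longrightarrow> b \<le> k \<Longrightarrow> \<kappa> b \<le> \<kappa> a"
  using \<kappa>_decreasing_low[of a b] by (cases "a = b") auto

lemma \<kappa>_antimono_high: "k < a \<Longrightarrow> a \<le> b \<Longrightarrow> b \<le> n \<Longrightarrow> \<kappa> b \<le> \<kappa> a"
  using \<kappa>_decreasing_high[of a b] by (cases "a = b") auto

lemma \<kappa>_neg_imp_le_k: "1 \<le> a \<Longrightarrow> a \<le> n \<Longrightarrow> \<kappa> a < 0 \<Longrightarrow> a \<le> k"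
  using \<kappa>_pos_high[of a] by fastforce

lemma Inv_subset_regions: "Inv n w \<subseteq> base_region k n \<union> top_region k"
proof
  fix \<alpha> assume \<alpha>: "\<alpha> \<in> Inv n w"
  then have "\<alpha> \<in> pos_roots n" by (simp add: Inv_def)
  then consider (minus) a b where "\<alpha> = vsub (ev a) (ev b)" "1 \<le> a" "a < b" "b \<le> n"
    | (plus) a b where "\<alpha> = vadd (ev a) (ev b)" "1 \<le> a" "a < b" "b \<le> n"
    | (unit) a where "\<alpha> = ev a" "1 \<le> a" "a \<le> n"
    unfolding pos_roots_def by blast
  then show "\<alpha> \<in> base_region k n \<union> top_region k"
  proof cases
    case minus
    with \<alpha> have "\<kappa> a < \<kappa> b" by (simp add: vsub_ev_in_Inv_iff)
    then have "\<not> (k < a)" "\<not> (b \<le> k)"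
      using minus \<kappa>_decreasing_low[of a b] \<kappa>_decreasing_high[of a b] by auto
    with minus show ?thesis by (simp add: vsub_ev_mem_base_region)
  next
    case plus
    show ?thesis
    proof (cases "b \<le> k")
      case True
      with plus show ?thesis by (simp add: vadd_ev_mem_top_region)
    next
      case False
      with plus \<alpha> have "\<kappa> a + \<kappa> b < 0" "0 < \<kappa> b"
        by (simp_all add: vadd_ev_in_Inv_iff \<kappa>_pos_high)
      with plus have "a \<le> k" by (simp add: \<kappa>_neg_imp_le_k)
      with plus False show ?thesis by (simp add: vadd_ev_mem_base_region)
    qed
  next
    case unit
    with \<alpha> have "a \<le> k" by (simp add: ev_in_Inv_iff \<kappa>_neg_imp_le_k)
    with unit show ?thesis by (simp add: ev_mem_base_region)
  qed
qed

lemma Inv_base_row_cases: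
  assumes "\<beta> \<in> Inv n w" "\<beta> \<in> base_row_idx k n c" "1 \<le> c" "c \<le> k"
  obtains (unit) "\<beta> = ev c" "\<kappa> c < 0"
    | (minus) d where "\<beta> = vsub (ev c) (ev d)" "k < d" "d \<le> n" "\<kappa> c < \<kappa> d"
    | (plus) d where "\<beta> = vadd (ev c) (ev d)" "k < d" "d \<le> n" "\<kappa> c + \<kappa> d < 0"
  using assms(2)
proof (cases rule: base_row_idx_cases)
  case unit
  with assms k_le_n that(1) show ?thesis by (simp add: ev_in_Inv_iff)
next
  case (minus d)
  with assms that(2) show ?thesis by (simp add: vsub_ev_in_Inv_iff)
next
  case (plus d)
  with assms that(3) show ?thesis by (simp add: vadd_ev_in_Inv_iff)
qed

lemma Inv_base_region_downward_closed:
  assumes le: "root_le n \<alpha> \<beta>" and \<beta>: "\<beta> \<in> Inv n w" "\<beta> \<in> base_region k n"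
    and \<alpha>: "\<alpha> \<in> base_region k n"
  shows "\<alpha> \<in> Inv n w"
proof -
  obtain c where c: "1 \<le> c" "c \<le> k" "\<beta> \<in> base_row_idx k n c"
    using \<beta>(2) by (auto simp: base_region_def)
  obtain a where a: "1 \<le> a" "a \<le> k" "\<alpha> \<in> base_row_idx k n a"
    using \<alpha> by (auto simp: base_region_def)
  have "c \<le> a" using root_le_base_row_index_le[OF le a(3) c(3) a(1,2) c(2) k_le_n] .
  with c(1) a(2) have \<kappa>_ca: "\<kappa> a \<le> \<kappa> c" by (simp add: \<kappa>_antimono_low)
  have total: "sum \<alpha> {1..n} \<le> sum \<beta> {1..n}"
    using root_le_prefix_sum_le[OF le, of n] a(1,2) k_le_n by simp
  from a(3) show ?thesis
  proof (cases rule: base_row_idx_cases)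
    case unit
    from \<beta>(1) c(3) c(1,2) have "\<kappa> c < 0"
    proof (cases rule: Inv_base_row_cases)
      case (minus d)
      with total unit a k_le_n show ?thesis by (simp add: sum_vsub sum_ev of_bool_def split: if_splits)
    next
      case (plus d)
      with \<kappa>_pos_high[of d] show ?thesis by simp
    qed
    with \<kappa>_ca unit a k_le_n show ?thesis by (simp add: ev_in_Inv_iff)
  next
    case (minus b)
    note \<alpha>_minus = this
    from \<beta>(1) c(3) c(1,2) have "\<kappa> a < \<kappa> b"
    proof (cases rule: Inv_base_row_cases)
      case unit
      with \<alpha>_minus \<kappa>_ca \<kappa>_pos_high[of b] show ?thesis by simp
    next
      case (minus d)
      with le \<alpha>_minus a c have "b \<le> d" using root_le_vsub_ev_index_le[of n a b c d] by simp
      with \<alpha>_minus minus \<kappa>_antimono_high[of b d] \<kappa>_ca show ?thesis by simp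
    next
      case (plus d)
      with \<alpha>_minus \<kappa>_ca \<kappa>_pos_high[of b] \<kappa>_pos_high[of d] show ?thesis by simp
    qed
    with \<alpha>_minus a show ?thesis by (simp add: vsub_ev_in_Inv_iff)
  next
    case (plus b)
    note \<alpha>_plus = this
    from \<beta>(1) c(3) c(1,2) have "\<kappa> a + \<kappa> b < 0"
    proof (cases rule: Inv_base_row_cases)
      case unit
      with total \<alpha>_plus a c k_le_n show ?thesis by (simp add: sum_vadd sum_ev)
    next
      case (minus d)
      with total \<alpha>_plus a c k_le_n show ?thesis by (simp add: sum_vsub sum_vadd sum_ev)
    next
      case (plus d)
      with le \<alpha>_plus a c have "d \<le> b" using root_le_vadd_ev_index_le(2)[of n a b c d] by simp
      with \<alpha>_plus plus \<kappa>_antimono_high[of d b] \<kappa>_ca show ?thesis by simp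
    qed
    with \<alpha>_plus a show ?thesis by (simp add: vadd_ev_in_Inv_iff)
  qed
qed

lemma Inv_top_region_downward_closed:
  assumes le: "root_le n \<alpha> \<beta>" and \<beta>: "\<beta> \<in> Inv n w" "\<beta> \<in> top_region k"
    and \<alpha>: "\<alpha> \<in> top_region k"
  shows "\<alpha> \<in> Inv n w"
proof -
  obtain c d where cd: "\<beta> = vadd (ev c) (ev d)" "1 \<le> c" "c < d" "d \<le> k"
    using \<beta>(2) unfolding top_region_def by blast
  obtain a b where ab: "\<alpha> = vadd (ev a) (ev b)" "1 \<le> a" "a < b" "b \<le> k"
    using \<alpha> unfolding top_region_def by blast
  have "c \<le> a" "d \<le> b"
    using root_le_vadd_ev_index_le[of n a b c d] le ab cd k_le_n by simp_all
  then have "\<kappa> a + \<kappa> b \<le> \<kappa> c + \<kappa> d"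
    using ab cd \<kappa>_antimono_low[of c a] \<kappa>_antimono_low[of d b] by simp
  moreover have "\<kappa> c + \<kappa> d < 0"
    using \<beta>(1) cd k_le_n by (simp add: vadd_ev_in_Inv_iff)
  ultimately show ?thesis
    using ab k_le_n by (simp add: vadd_ev_in_Inv_iff)
qed

lemma card_Inv_two_base_rows:
  assumes "1 \<le> a" "a < b" "b \<le> k"
  shows "card (Inv n w \<inter> (base_row_idx k n a \<union> base_row_idx k n b)) =
    card (Inv n w \<inter> base_row_idx k n a) + card (Inv n w \<inter> base_row_idx k n b)"
proof -
  have "base_row_idx k n a \<inter> base_row_idx k n b = {}"
    using assms by (intro base_rows_disjoint) auto
  then show ?thesis
    by (subst Int_Un_distrib, intro card_Un_disjoint) (auto intro: finite_base_row_idx)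
qed

lemma card_Inv_two_base_rows_bounds:
  assumes "1 \<le> a" "a < b" "b \<le> k"
  defines "C \<equiv> card (Inv n w \<inter> (base_row_idx k n a \<union> base_row_idx k n b))"
  shows "(\<kappa> a + \<kappa> b < 0 \<longrightarrow> 2 * (n - k) + 1 \<le> C) \<and> (0 < \<kappa> a + \<kappa> b \<longrightarrow> C \<le> 2 * (n - k) + 1)"
proof -
  define A where "A m = {x \<in> {k<..n}. m < \<kappa> x}" for m
  define N where "N m = {x \<in> {k<..n}. m + \<kappa> x < 0}" for m
  have C: "C = card (A (\<kappa> a)) + card (N (\<kappa> a)) + of_bool (\<kappa> a < 0)
             + card (A (\<kappa> b)) + card (N (\<kappa> b)) + of_bool (\<kappa> b < 0)"
    unfolding C_def A_def N_def using assms k_le_n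
    by (simp add: card_Inv_two_base_rows card_Inv_base_row)
  have card_A_le: "card (A m) \<le> n - k" for m
    unfolding A_def by (auto intro: order.trans[OF card_mono[of "{k<..n}"]])
  have A_all: "A m = {k<..n}" if "m < 0" for m
    using that \<kappa>_pos_high by (force simp: A_def)
  have N_none: "N m = {}" if "0 < m" for m
    using that \<kappa>_pos_high by (force simp: N_def)
  have "\<kappa> b < \<kappa> a" using \<kappa>_decreasing_low assms by blast
  moreover have "\<kappa> a \<noteq> 0" "\<kappa> b \<noteq> 0" using assms k_le_n by (simp_all add: \<kappa>_nonzero)
  ultimately consider (pos) "0 < \<kappa> b" | (mixed) "\<kappa> b < 0" "0 < \<kappa> a" | (neg) "\<kappa> a < 0"
    by linarith
  then show ?thesis
  proof cases
    case pos
    with \<open>\<kappa> b < \<kappa> a\<close> have "C = card (A (\<kappa> a)) + card (A (\<kappa> b))"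
      by (simp add: C N_none)
    with card_A_le[of "\<kappa> a"] card_A_le[of "\<kappa> b"] pos \<open>\<kappa> b < \<kappa> a\<close> show ?thesis by simp
  next
    case neg
    with \<open>\<kappa> b < \<kappa> a\<close> show ?thesis by (simp add: C A_all)
  next
    case mixed
    then have "C = card (A (\<kappa> a)) + card (N (\<kappa> b)) + (n - k) + 1"
      by (simp add: C A_all N_none)
    with card_above_add_card_below[of "{k<..n}" "\<kappa> a" "\<kappa> b" \<kappa>] show ?thesis
      unfolding A_def N_def by auto
  qed
qed

lemma support_condition:
  assumes "1 \<le> a" "a < b" "b \<le> k"
  shows "let c = card (Inv n w \<inter> (base_row k n (k + 1 - a) \<union> base_row k n (k + 1 - b))) in
           (c > 2 * n + 1 - 2 * k \<longrightarrow> vadd (ev a) (ev b) \<in> Inv n w) \<and>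
           (c < 2 * n + 1 - 2 * k \<longrightarrow> vadd (ev a) (ev b) \<notin> Inv n w)"
proof -
  have rows: "base_row k n (k + 1 - a) = base_row_idx k n a" "base_row k n (k + 1 - b) = base_row_idx k n b"
    using assms by (simp_all add: base_row_def)
  have "\<bar>\<kappa> a\<bar> \<noteq> \<bar>\<kappa> b\<bar>" using abs_\<kappa>_inj[of a b] assms k_le_n by auto
  then have "\<kappa> a + \<kappa> b \<noteq> 0" by linarith
  moreover have "2 * n + 1 - 2 * k = 2 * (n - k) + 1" using k_le_n by simp
  ultimately show ?thesis
    unfolding Let_def rows
    using card_Inv_two_base_rows_bounds[OF assms] vadd_ev_in_Inv_iff[of a b] assms k_le_n
    by auto
qed

lemma is_W_OG_diagram_Inv: "is_W_OG_diagram k n (Inv n w)"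
  unfolding is_W_OG_diagram_def lower_ideal_def
  using Inv_subset_regions Inv_base_region_downward_closed Inv_top_region_downward_closed support_condition
  by blast

end

theorem lemma3p5:
  fixes k n :: nat
  assumes "1 \<le> k" and "k < n"
  shows "Y_OG k n \<subseteq> Theta k n"
proof
  fix S assume "S \<in> Y_OG k n"
  then obtain w where w: "w \<in> W_OG k n" and S: "S = Inv n w" unfolding Y_OG_def by blast
  interpret grassmannian_signed_perm n w k
    using grassmannian_signed_perm_if_W_OG[OF w] assms(2) by simp
  show "S \<in> Theta k n" unfolding Theta_def S using is_W_OG_diagram_Inv by simp
qed

end
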